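(* The twi-distance $\delta^*:\mathcal{T}^*\times\mathcal{T}^*\to\mathbb{R}_{\ge0}$, $\delta^*([x],[y])=\inf_{x'\in[x]}\inf_{y'\in[y]}\delta(x',y')$, is well defined and is a semi-metric on $\mathcal{T}^*$, and it satisfies $\delta^*([x],[y])=\delta(x^*,y^* )$ for all $x,y\in\mathcal{T}$, where $x^*,y^*$ are the condensed forms of $x,y$.
   Context: A time series of length $n\ge1$ is a finite real sequence; $\mathcal{T}$ is the set of all time series of finite length. For $m,n\in\mathbb{N}$, a warping path of order $m\times n$ is a sequence $p=(p_1,\dots,p_\ell)$ of points in $[m]\times[n]$ ($[n]=\{1,\dots,n\}$) with $p_1=(1,1)$, $p_\ell=(m,n)$, $p_{l+1}-p_l\in\{(1,0),(0,1),(1,1)\}$; $\mathcal{P}_{m,n}$ is the set of these. The dtw-distance of $x$ (length $m$) and $y$ (length $n$) is $\delta(x,y)=\min_{p\in\mathcal{P}_{m,n}}\big(\sum_{(i,j)\in p}(x_i-y_j)^2\big)^{1/2}$. Warping identification is the relation $x\sim y\iff\delta(x,y)=0$, which is an equivalence relation; $[x]=\{y\in\mathcal{T}:x\sim y\}$ and $\mathcal{T}^*=\{[x]:x\in\mathcal{T}\}$ is the quotient set. A time series $x'$ is an expansion of $x=(x_1,\dots,x_n)$, written $x'\succ x$, if there are integers $\alpha_i\ge1$ with $x'=(x_1^{(\alpha_1)},\dots,x_n^{(\alpha_n)})$, where $x_i^{(\alpha_i)}$ denotes $\alpha_i$ consecutive copies of $x_i$. A time series is irreducible if no two consecutive elements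 are equal. The condensed form $x^*$ of $x$ is the unique irreducible time series with $x\succ x^*$ (obtained by collapsing maximal runs of equal consecutive values). A semi-metric on a set $X$ is a function $d:X\times X\to\mathbb{R}$ with $d\ge0$, $d(a,b)=0\iff a=b$, and $d(a,b)=d(b,a)$. *)

theory Defs
  imports Complex_Main
begin

text \<open>Time series: nonempty finite real sequences, represented as lists; index i (1-based)
  of x is x ! (i - 1).\<close>

definition TS :: "real list set" where
  "TS = {x. x \<noteq> []}"

definition is_warping_path :: "nat \<Rightarrow> nat \<Rightarrow> (nat \<times> nat) list \<Rightarrow> bool" where
  "is_warping_path m n p \<longleftrightarrow>
     p \<noteq> [] \<and> hd p = (1, 1) \<and> last p = (m, n) \<and>
     (\<forall>q\<in>set p. fst q \<in> {1..m} \<and> snd q \<in> {1..n}) \<and>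
     (\<forall>k. Suc k < length p \<longrightarrow>
        p ! Suc k \<in> {(fst (p ! k) + 1, snd (p ! k)),
                      (fst (p ! k), snd (p ! k) + 1),
                      (fst (p ! k) + 1, snd (p ! k) + 1)})"

definition warping_paths :: "nat \<Rightarrow> nat \<Rightarrow> (nat \<times> nat) list set" where
  "warping_paths m n = {p. is_warping_path m n p}"

definition path_cost :: "real list \<Rightarrow> real list \<Rightarrow> (nat \<times> nat) list \<Rightarrow> real" where
  "path_cost x y p = (\<Sum>(i, j)\<leftarrow>p. (x ! (i - 1) - y ! (j - 1))\<^sup>2)"

definition dtw :: "real list \<Rightarrow> real list \<Rightarrow> real" where
  "dtw x y = sqrt (Min (path_cost x y ` warping_paths (length x) (length y)))"

definition warp_ident :: "real list \<Rightarrow> real list \<Rightarrow> bool" where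
  "warp_ident x y \<longleftrightarrow> dtw x y = 0"

definition wclass :: "real list \<Rightarrow> real list set" where
  "wclass x = {y \<in> TS. warp_ident x y}"

definition TSstar :: "real list set set" where
  "TSstar = wclass ` TS"

definition twi_dist :: "real list set \<Rightarrow> real list set \<Rightarrow> real" where
  "twi_dist A B = (INF x'\<in>A. INF y'\<in>B. dtw x' y')"

definition expansion :: "real list \<Rightarrow> real list \<Rightarrow> bool" where
  "expansion x' x \<longleftrightarrow> (\<exists>\<alpha>::nat list. length \<alpha> = length x \<and> (\<forall>a\<in>set \<alpha>. a \<ge> 1) \<and>
      x' = concat (map (\<lambda>(v, a). replicate a v) (zip x \<alpha>)))"

definition irreducible_ts :: "real list \<Rightarrow> bool" where
  "irreducible_ts x \<longleftrightarrow> (\<forall>i. Suc i < length x \<longrightarrow> x ! i \<noteq> x ! Suc i)"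

definition condensed :: "real list \<Rightarrow> real list" where
  "condensed x = (THE z. irreducible_ts z \<and> expansion x z)"

definition semimetric_on :: "'a set \<Rightarrow> ('a \<Rightarrow> 'a \<Rightarrow> real) \<Rightarrow> bool" where
  "semimetric_on X d \<longleftrightarrow>
     (\<forall>a\<in>X. \<forall>b\<in>X. d a b \<ge> 0 \<and> (d a b = 0 \<longleftrightarrow> a = b) \<and> d a b = d b a)"

end

theory Submission
  imports Defs
begin

text \<open>Running the dtw recursion from the front, the costs of all warping paths between
  \<open>a # x\<close> and \<open>b # y\<close> are \<open>(a - b)\<^sup>2\<close> plus a path cost for \<open>(x, y)\<close>, \<open>(x, b # y)\<close> or
  \<open>(a # x, y)\<close>. Deleting a repeated element never
  increases the cheapest cost, since every path through the duplicate can be rerouted;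
  hence \<open>\<delta>(x\<^sup>*, y) \<le> \<delta>(x, y)\<close>. And a path of cost zero forces equal condensed forms.
  So \<open>[x]\<close> consists of the series with condensed form \<open>x\<^sup>*\<close>, the infimum defining
  \<open>\<delta>\<^sup>*([x], [y])\<close> is attained at \<open>(x\<^sup>*, y\<^sup>*)\<close>, and the semi-metric axioms reduce to those
  of \<open>\<delta>\<close> on irreducible series.\<close>

fun warp_costs :: "real list \<Rightarrow> real list \<Rightarrow> real set" where
  "warp_costs [] _ = {}"
| "warp_costs _ [] = {}"
| "warp_costs [a] [b] = {(a - b)\<^sup>2}"
| "warp_costs (a # x) (b # y) =
     (\<lambda>c. (a - b)\<^sup>2 + c) ` (warp_costs x y \<union> warp_costs x (b # y) \<union> warp_costs (a # x) y)"

lemma warp_costs_Cons_Cons: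
  "x \<noteq> [] \<or> y \<noteq> [] \<Longrightarrow> warp_costs (a # x) (b # y) =
     (\<lambda>c. (a - b)\<^sup>2 + c) ` (warp_costs x y \<union> warp_costs x (b # y) \<union> warp_costs (a # x) y)"
  by (cases x; cases y) auto

lemma warp_costs_Nil_right [simp]: "warp_costs x [] = {}"
  by (cases x) auto

lemma finite_warp_costs: "finite (warp_costs x y)"
  by (induction x y rule: warp_costs.induct) auto

lemma warp_costs_nonneg: "c \<in> warp_costs x y \<Longrightarrow> 0 \<le> c"
  by (induction x y arbitrary: c rule: warp_costs.induct) auto

lemma warp_costs_nonempty: "x \<noteq> [] \<Longrightarrow> y \<noteq> [] \<Longrightarrow> warp_costs x y \<noteq> {}"
  by (induction x y rule: warp_costs.induct) auto

lemma Min_warp_costs_in: "x \<noteq> [] \<Longrightarrow> y \<noteq> [] \<Longrightarrow> Min (warp_costs x y) \<in> warp_costs x y"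
  by (simp add: finite_warp_costs warp_costs_nonempty)

lemma warp_costs_commute: "warp_costs x y = warp_costs y x"
proof (induction x y rule: warp_costs.induct)
  case ("4_1" a v va b y)
  then show ?case by (cases y) (auto simp: power2_commute)
next
  case ("4_2" a x b v va)
  then show ?case by (cases x) (auto simp: power2_commute)
qed (auto simp: power2_commute)

subsection \<open>Warping paths and the cost recursion\<close>

definition warp_step :: "nat \<times> nat \<Rightarrow> nat \<times> nat \<Rightarrow> bool" where
  "warp_step u v \<longleftrightarrow> v \<in> {(fst u + 1, snd u), (fst u, snd u + 1), (fst u + 1, snd u + 1)}"

lemma is_warping_path_iff_successively:
  "is_warping_path m n p \<longleftrightarrow>
     p \<noteq> [] \<and> hd p = (1, 1) \<and> last p = (m, n) \<and>
     (\<forall>q\<in>set p. fst q \<in> {1..m} \<and> snd q \<in> {1..n}) \<and> successively warp_step p"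
  unfolding is_warping_path_def successively_conv_nth warp_step_def by simp

lemma is_warping_path_coords_pos:
  "is_warping_path m n p \<Longrightarrow> \<forall>q\<in>set p. 1 \<le> fst q \<and> 1 \<le> snd q"
  unfolding is_warping_path_iff_successively by auto

lemma is_warping_path_dims_pos: "is_warping_path m n p \<Longrightarrow> 1 \<le> m \<and> 1 \<le> n"
  unfolding is_warping_path_iff_successively using hd_in_set by force

lemma successively_warp_step_hd_le:
  "successively warp_step q \<Longrightarrow> r \<in> set q \<Longrightarrow> fst (hd q) \<le> fst r \<and> snd (hd q) \<le> snd r"
proof (induction q rule: induct_list012)
  case (3 x y xs)
  then show ?case by (fastforce simp: warp_step_def)
qed auto

definition shift_path :: "nat \<Rightarrow> nat \<Rightarrow> (nat \<times> nat) list \<Rightarrow> (nat \<times> nat) list" where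
  "shift_path di dj p = (1, 1) # map (\<lambda>(i, j). (i + di, j + dj)) p"

lemma is_warping_path_shift_path:
  assumes p: "is_warping_path m n p" and d: "(di, dj) \<in> {(1, 0), (0, 1), (1, 1)}"
  shows "is_warping_path (m + di) (n + dj) (shift_path di dj p)"
proof -
  let ?q = "map (\<lambda>(i, j). (i + di, j + dj)) p"
  have p': "p \<noteq> []" "hd p = (1, 1)" "last p = (m, n)"
    "\<forall>q\<in>set p. fst q \<in> {1..m} \<and> snd q \<in> {1..n}" "successively warp_step p"
    using p unfolding is_warping_path_iff_successively by auto
  have "successively warp_step ?q"
    unfolding successively_map using p'(5)
    by (rule successively_mono) (auto simp: warp_step_def split: prod.splits)
  moreover have "warp_step (1, 1) (hd ?q)"
    using p'(1,2) d by (auto simp: warp_step_def hd_map)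
  ultimately have "successively warp_step (shift_path di dj p)"
    unfolding shift_path_def using p'(1) by (cases p) (auto simp: successively_Cons)
  moreover have "1 \<le> m" "1 \<le> n"
    using is_warping_path_dims_pos[OF p] by auto
  ultimately show ?thesis
    using p'(1,3,4) by (auto simp: is_warping_path_iff_successively shift_path_def last_map)
qed

lemma is_warping_path_shift_path_cases:
  assumes p: "is_warping_path m n p" and "2 \<le> length p"
  obtains di dj p' where "(di, dj) \<in> {(1, 0), (0, 1), (1, 1)}" "p = shift_path di dj p'"
    "is_warping_path (m - di) (n - dj) p'"
proof -
  have p': "hd p = (1, 1)" "last p = (m, n)"
    "\<forall>q\<in>set p. fst q \<in> {1..m} \<and> snd q \<in> {1..n}" "successively warp_step p"
    using p unfolding is_warping_path_iff_successively by auto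
  obtain v rest where p_eq: "p = (1, 1) # v # rest"
    using \<open>2 \<le> length p\<close> p'(1) by (cases p; cases "tl p") auto
  have sv: "successively warp_step (v # rest)" and "warp_step (1, 1) v"
    using p'(4) p_eq by (auto simp: successively_Cons)
  then obtain di dj where d: "(di, dj) \<in> {(1, 0), (0, 1), (1, 1)}" and v: "v = (1 + di, 1 + dj)"
    unfolding warp_step_def by auto
  define p'' where "p'' = map (\<lambda>(i, j). (i - di, j - dj)) (v # rest)"
  have ge: "\<forall>r\<in>set (v # rest). 1 + di \<le> fst r \<and> 1 + dj \<le> snd r"
    using successively_warp_step_hd_le[OF sv] v by fastforce
  have "map (\<lambda>(i, j). (i + di, j + dj)) p'' = v # rest"
    unfolding p''_def map_map by (rule map_idI) (use ge in \<open>auto split: prod.splits\<close>)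
  then have "p = shift_path di dj p''"
    using p_eq by (simp add: shift_path_def)
  moreover have "successively warp_step p''"
    unfolding p''_def successively_map using sv
    by (rule successively_mono) (use ge in \<open>auto simp: warp_step_def split: prod.splits\<close>)
  moreover have "\<forall>q\<in>set p''. fst q \<in> {1..m - di} \<and> snd q \<in> {1..n - dj}"
  proof
    fix q assume "q \<in> set p''"
    then have "q \<in> (\<lambda>r. (fst r - di, snd r - dj)) ` set (v # rest)"
      unfolding p''_def by (simp add: case_prod_unfold)
    then obtain r where "r \<in> set (v # rest)" "q = (fst r - di, snd r - dj)"
      by blast
    then show "fst q \<in> {1..m - di} \<and> snd q \<in> {1..n - dj}"
      using p'(3) ge p_eq by force
  qed
  moreover have "last p'' = (m - di, n - dj)"
    using p'(2) p_eq by (auto simp: p''_def last_map)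
  ultimately show ?thesis
    using that d v by (simp add: is_warping_path_iff_successively p''_def)
qed

lemma path_cost_shift_path:
  assumes "\<forall>q\<in>set p. 1 \<le> fst q \<and> 1 \<le> snd q" "di \<le> 1" "dj \<le> 1"
  shows "path_cost (a # x) (b # y) (shift_path di dj p) =
           (a - b)\<^sup>2 + path_cost (drop di (a # x)) (drop dj (b # y)) p"
proof -
  have "((a # x) ! (i + di - 1) - (b # y) ! (j + dj - 1))\<^sup>2 =
          (drop di (a # x) ! (i - 1) - drop dj (b # y) ! (j - 1))\<^sup>2" if "(i, j) \<in> set p" for i j
  proof -
    have "1 \<le> i" "1 \<le> j" using assms(1) that by auto
    then show ?thesis using assms(2,3) by (simp add: nth_drop add.commute)
  qed
  then show ?thesis
    unfolding path_cost_def shift_path_def by (simp add: comp_def case_prod_unfold cong: map_cong)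
qed

lemma path_cost_in_warp_costs:
  "is_warping_path (length x) (length y) p \<Longrightarrow> path_cost x y p \<in> warp_costs x y"
proof (induction "length p" arbitrary: p x y rule: less_induct)
  case less
  obtain a x' b y' where xy: "x = a # x'" "y = b # y'"
    using is_warping_path_dims_pos[OF less.prems] by (cases x; cases y) auto
  show ?case
  proof (cases "2 \<le> length p")
    case False
    then have "p = [(1, 1)]" "(1, 1) = (length x, length y)"
      using less.prems unfolding is_warping_path_iff_successively
      by (cases p; cases "tl p"; auto)+
    then show ?thesis using xy by (simp add: path_cost_def)
  next
    case True
    then obtain di dj p' where d: "(di, dj) \<in> {(1, 0), (0, 1), (1, 1)}"
      and p: "p = shift_path di dj p'" and p': "is_warping_path (length x - di) (length y - dj) p'"
      using is_warping_path_shift_path_cases[OF less.prems] by blast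
    have "path_cost (drop di x) (drop dj y) p' \<in> warp_costs (drop di x) (drop dj y)"
      using less.hyps[of p'] p p' by (simp add: shift_path_def)
    moreover have "path_cost x y p = (a - b)\<^sup>2 + path_cost (drop di x) (drop dj y) p'"
      unfolding p xy using d is_warping_path_coords_pos[OF p'] by (intro path_cost_shift_path) auto
    moreover have "x' \<noteq> [] \<or> y' \<noteq> []"
      using is_warping_path_dims_pos[OF p'] d xy by auto
    ultimately show ?thesis
      using d unfolding xy by (auto simp: warp_costs_Cons_Cons)
  qed
qed

lemma warp_costs_obtain_path:
  "c \<in> warp_costs x y \<Longrightarrow> \<exists>p. is_warping_path (length x) (length y) p \<and> path_cost x y p = c"
proof (induction "length x + length y" arbitrary: x y c rule: less_induct)
  case less
  obtain a x' b y' where xy: "x = a # x'" "y = b # y'"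
    using less.prems by (cases x; cases y) auto
  show ?case
  proof (cases "x' = [] \<and> y' = []")
    case True
    then show ?thesis using less.prems xy
      by (intro exI[of _ "[(1, 1)]"]) (simp add: is_warping_path_iff_successively path_cost_def)
  next
    case False
    then have ne: "x' \<noteq> [] \<or> y' \<noteq> []" by simp
    then obtain di dj c' where d: "(di, dj) \<in> {(1, 0), (0, 1), (1, 1)}" and c: "c = (a - b)\<^sup>2 + c'"
      and c': "c' \<in> warp_costs (drop di x) (drop dj y)"
      using less.prems unfolding xy warp_costs_Cons_Cons[OF ne] by force
    then obtain p where p: "is_warping_path (length (drop di x)) (length (drop dj y)) p"
      "path_cost (drop di x) (drop dj y) p = c'"
      using less.hyps[of "drop di x" "drop dj y"] xy by fastforce
    have "is_warping_path (length x) (length y) (shift_path di dj p)"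
      using is_warping_path_shift_path[OF p(1) d] d xy by auto
    moreover have "path_cost x y (shift_path di dj p) = c"
      using path_cost_shift_path[OF is_warping_path_coords_pos[OF p(1)]] d p(2) c xy by auto
    ultimately show ?thesis by blast
  qed
qed

lemma dtw_eq_sqrt_Min_warp_costs: "dtw x y = sqrt (Min (warp_costs x y))"
proof -
  have "path_cost x y ` warping_paths (length x) (length y) = warp_costs x y"
    using path_cost_in_warp_costs warp_costs_obtain_path unfolding warping_paths_def by fastforce
  then show ?thesis unfolding dtw_def by simp
qed

lemma dtw_commute: "dtw x y = dtw y x"
  unfolding dtw_eq_sqrt_Min_warp_costs by (simp only: warp_costs_commute[of x y])

lemma dtw_nonneg: "x \<noteq> [] \<Longrightarrow> y \<noteq> [] \<Longrightarrow> 0 \<le> dtw x y"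
  unfolding dtw_eq_sqrt_Min_warp_costs using warp_costs_nonneg[OF Min_warp_costs_in] by simp

lemma dtw_eq_0_iff: "x \<noteq> [] \<Longrightarrow> y \<noteq> [] \<Longrightarrow> dtw x y = 0 \<longleftrightarrow> 0 \<in> warp_costs x y"
proof -
  assume ne: "x \<noteq> []" "y \<noteq> []"
  have "0 \<in> warp_costs x y \<Longrightarrow> Min (warp_costs x y) = 0"
    using Min_warp_costs_in[OF ne] finite_warp_costs warp_costs_nonneg by (meson Min_le antisym)
  then show ?thesis
    using Min_warp_costs_in[OF ne] unfolding dtw_eq_sqrt_Min_warp_costs by force
qed

subsection \<open>Removing repetitions\<close>

definition warp_costs_dominate :: "real list \<Rightarrow> real list \<Rightarrow> bool" where
  "warp_costs_dominate x' x \<longleftrightarrow> (\<forall>y. \<forall>c\<in>warp_costs x y. \<exists>c'\<in>warp_costs x' y. c' \<le> c)"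

lemma warp_costs_dominate_refl: "warp_costs_dominate x x"
  unfolding warp_costs_dominate_def by auto

lemma warp_costs_dominate_trans:
  "warp_costs_dominate x y \<Longrightarrow> warp_costs_dominate y z \<Longrightarrow> warp_costs_dominate x z"
  unfolding warp_costs_dominate_def by (meson order_trans)

lemma warp_costs_dominate_duplicate: "warp_costs_dominate (a # x) (a # a # x)"
  unfolding warp_costs_dominate_def
proof (intro allI ballI)
  fix y c assume "c \<in> warp_costs (a # a # x) y"
  then show "\<exists>c'\<in>warp_costs (a # x) y. c' \<le> c"
  proof (induction y arbitrary: c)
    case (Cons b y)
    then obtain c1 where c: "c = (a - b)\<^sup>2 + c1" and
      "c1 \<in> warp_costs (a # x) y \<or> c1 \<in> warp_costs (a # x) (b # y) \<or> c1 \<in> warp_costs (a # a # x) y"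
      by (auto simp: warp_costs_Cons_Cons)
    then consider "c1 \<in> warp_costs (a # x) y" | "c1 \<in> warp_costs (a # x) (b # y)"
      | c2 where "c2 \<in> warp_costs (a # x) y" "c2 \<le> c1"
      using Cons.IH by blast
    then show ?case
    proof cases
      case 1
      then have "y \<noteq> []" by auto
      with 1 c show ?thesis by (auto simp: warp_costs_Cons_Cons)
    next
      \<comment> \<open>The step onto the duplicate is dropped, which saves \<open>(a - b)\<^sup>2 \<ge> 0\<close>.\<close>
      case 2
      then show ?thesis using c by (intro bexI[of _ c1]) auto
    next
      case 3
      then have "y \<noteq> []" by auto
      with 3 c show ?thesis by (force simp: warp_costs_Cons_Cons)
    qed
  qed simp
qed

lemma warp_costs_dominate_Cons:
  assumes "x \<noteq> []" "x' \<noteq> []" "warp_costs_dominate x' x"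
  shows "warp_costs_dominate (a # x') (a # x)"
  unfolding warp_costs_dominate_def
proof (intro allI ballI)
  fix y c assume "c \<in> warp_costs (a # x) y"
  then show "\<exists>c'\<in>warp_costs (a # x') y. c' \<le> c"
  proof (induction y arbitrary: c)
    case (Cons b y)
    then obtain c1 where c: "c = (a - b)\<^sup>2 + c1" and
      "c1 \<in> warp_costs x y \<or> c1 \<in> warp_costs x (b # y) \<or> c1 \<in> warp_costs (a # x) y"
      using assms(1) by (auto simp: warp_costs_Cons_Cons)
    then obtain c2 where "c2 \<le> c1"
      "c2 \<in> warp_costs x' y \<or> c2 \<in> warp_costs x' (b # y) \<or> c2 \<in> warp_costs (a # x') y"
      using Cons.IH assms(3) unfolding warp_costs_dominate_def by blast
    then show ?case using c assms(2) by (force simp: warp_costs_Cons_Cons)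
  qed simp
qed

lemma warp_costs_dominate_remdups_adj: "x \<noteq> [] \<Longrightarrow> warp_costs_dominate (remdups_adj x) x"
proof (induction x rule: remdups_adj.induct)
  case (3 a b xs)
  then show ?case
    using warp_costs_dominate_duplicate[of a xs] warp_costs_dominate_trans
      warp_costs_dominate_Cons[of "b # xs" "remdups_adj (b # xs)" a]
    by (cases "a = b") simp_all
qed (simp_all add: warp_costs_dominate_refl)

lemma dtw_remdups_adj_left_le: "x \<noteq> [] \<Longrightarrow> y \<noteq> [] \<Longrightarrow> dtw (remdups_adj x) y \<le> dtw x y"
proof -
  assume ne: "x \<noteq> []" "y \<noteq> []"
  then obtain c' where "c' \<in> warp_costs (remdups_adj x) y" "c' \<le> Min (warp_costs x y)"
    using Min_warp_costs_in warp_costs_dominate_remdups_adj unfolding warp_costs_dominate_def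
    by blast
  then have "Min (warp_costs (remdups_adj x) y) \<le> Min (warp_costs x y)"
    using finite_warp_costs Min_le order_trans by blast
  then show ?thesis unfolding dtw_eq_sqrt_Min_warp_costs by simp
qed

lemma dtw_remdups_adj_right_le: "x \<noteq> [] \<Longrightarrow> y \<noteq> [] \<Longrightarrow> dtw x (remdups_adj y) \<le> dtw x y"
  using dtw_remdups_adj_left_le dtw_commute by metis

subsection \<open>Paths of cost zero\<close>

lemma remdups_adj_Cons_cong:
  "remdups_adj x = remdups_adj y \<Longrightarrow> remdups_adj (a # x) = remdups_adj (a # y)"
  by (simp add: remdups_adj_Cons)

lemma remdups_adj_eq_if_0_in_warp_costs:
  "0 \<in> warp_costs x y \<Longrightarrow> remdups_adj x = remdups_adj y"
proof (induction "length x + length y" arbitrary: x y rule: less_induct)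
  case less
  obtain a x' b y' where xy: "x = a # x'" "y = b # y'"
    using less.prems by (cases x; cases y) auto
  show ?case
  proof (cases "x' = [] \<and> y' = []")
    case True
    then show ?thesis using less.prems xy by simp
  next
    case False
    then have ne: "x' \<noteq> [] \<or> y' \<noteq> []" by simp
    then obtain c where c: "0 = (a - b)\<^sup>2 + c"
      and c_in: "c \<in> warp_costs x' y' \<union> warp_costs x' y \<union> warp_costs x y'"
      using less.prems unfolding xy warp_costs_Cons_Cons[OF ne] by auto
    have "0 \<le> c" using c_in warp_costs_nonneg by blast
    with c have "a = b" "c = 0" by (simp_all add: add_nonneg_eq_0_iff)
    with c_in consider "0 \<in> warp_costs x' y'" | "0 \<in> warp_costs x' y" | "0 \<in> warp_costs x y'"
      by blast
    then show ?thesis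
    proof cases
      case 1
      then have "remdups_adj x' = remdups_adj y'" using less.hyps[of x' y'] xy by simp
      then show ?thesis using xy \<open>a = b\<close> remdups_adj_Cons_cong[of x' y' b] by simp
    next
      case 2
      then have "remdups_adj x' = remdups_adj (b # y')" using less.hyps[of x' "b # y'"] xy by simp
      then show ?thesis using xy \<open>a = b\<close> remdups_adj_Cons_cong[of x' "b # y'" b] by simp
    next
      case 3
      then have "remdups_adj (a # x') = remdups_adj y'" using less.hyps[of "a # x'" y'] xy by simp
      then show ?thesis using xy \<open>a = b\<close> remdups_adj_Cons_cong[of "a # x'" y' a] by simp
    qed
  qed
qed

lemma zero_in_warp_costs_if_remdups_adj_eq:
  "x \<noteq> [] \<Longrightarrow> y \<noteq> [] \<Longrightarrow> remdups_adj x = remdups_adj y \<Longrightarrow> 0 \<in> warp_costs x y"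
proof (induction "length x + length y" arbitrary: x y rule: less_induct)
  case less
  obtain a x' b y' where xy: "x = a # x'" "y = b # y'"
    using less.prems by (cases x; cases y) auto
  have "a = b" using arg_cong[OF less.prems(3), of hd] xy by simp
  consider "x' \<noteq> [] \<and> hd x' = a" | "y' \<noteq> [] \<and> hd y' = a"
    | "x' = [] \<or> hd x' \<noteq> a" "y' = [] \<or> hd y' \<noteq> a"
    by blast
  then show ?case
  proof cases
    case 1
    then have "remdups_adj x' = remdups_adj y" using less.prems(3) xy by (cases x') auto
    then have "0 \<in> warp_costs x' y" using less.hyps 1 xy by simp
    then show ?thesis using xy 1 \<open>a = b\<close> by (auto simp: warp_costs_Cons_Cons)
  next
    case 2
    then have "remdups_adj x = remdups_adj y'" using less.prems(3) xy \<open>a = b\<close> by (cases y') auto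
    then have "0 \<in> warp_costs x y'" using less.hyps 2 xy by simp
    then show ?thesis using xy 2 \<open>a = b\<close> by (auto simp: warp_costs_Cons_Cons)
  next
    case 3
    have "remdups_adj x = a # remdups_adj x'" using 3(1) xy by (cases x') auto
    moreover have "remdups_adj y = a # remdups_adj y'" using 3(2) xy \<open>a = b\<close> by (cases y') auto
    ultimately have same: "remdups_adj x' = remdups_adj y'" using less.prems(3) by simp
    show ?thesis
    proof (cases "x' = []")
      case True
      then have "y' = []" using same by (metis remdups_adj_Nil_iff)
      then show ?thesis using True xy \<open>a = b\<close> by simp
    next
      case False
      moreover have "y' \<noteq> []" using False same by (metis remdups_adj_Nil_iff)
      ultimately have "0 \<in> warp_costs x' y'" using less.hyps[of x' y'] same xy by simp
      then show ?thesis using False xy \<open>a = b\<close> by (auto simp: warp_costs_Cons_Cons)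
    qed
  qed
qed

lemma dtw_eq_0_iff_remdups_adj_eq:
  "x \<noteq> [] \<Longrightarrow> y \<noteq> [] \<Longrightarrow> dtw x y = 0 \<longleftrightarrow> remdups_adj x = remdups_adj y"
  using dtw_eq_0_iff remdups_adj_eq_if_0_in_warp_costs zero_in_warp_costs_if_remdups_adj_eq
  by blast

subsection \<open>Condensed forms\<close>

lemma remdups_adj_replicate_append:
  "1 \<le> k \<Longrightarrow> remdups_adj (replicate k v @ r) = remdups_adj (v # r)"
proof (induction k)
  case (Suc k)
  then show ?case by (cases k) simp_all
qed simp

lemma remdups_adj_expansion:
  assumes "length \<alpha> = length z" "\<forall>k\<in>set \<alpha>. 1 \<le> k"
  shows "remdups_adj (concat (map (\<lambda>(v, k). replicate k v) (zip z \<alpha>))) = remdups_adj z"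
  using assms
proof (induction z arbitrary: \<alpha>)
  case (Cons v z)
  then obtain k \<alpha>' where \<alpha>: "\<alpha> = k # \<alpha>'" by (cases \<alpha>) auto
  with Cons show ?case
    by (simp add: remdups_adj_replicate_append remdups_adj_Cons)
qed simp

lemma expansion_Cons: "expansion x z \<Longrightarrow> expansion (a # x) (a # z)"
proof -
  assume "expansion x z"
  then obtain \<alpha> where "length \<alpha> = length z" "\<forall>k\<in>set \<alpha>. 1 \<le> k"
    "x = concat (map (\<lambda>(v, k). replicate k v) (zip z \<alpha>))"
    unfolding expansion_def by blast
  then show ?thesis
    unfolding expansion_def by (intro exI[of _ "1 # \<alpha>"]) auto
qed

lemma expansion_Cons_repeat: "expansion x (a # z) \<Longrightarrow> expansion (a # x) (a # z)"
proof -
  assume "expansion x (a # z)"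
  then obtain \<alpha> where \<alpha>: "length \<alpha> = length (a # z)" "\<forall>k\<in>set \<alpha>. 1 \<le> k"
    "x = concat (map (\<lambda>(v, k). replicate k v) (zip (a # z) \<alpha>))"
    unfolding expansion_def by blast
  then obtain k \<alpha>' where "\<alpha> = k # \<alpha>'" by (cases \<alpha>) auto
  with \<alpha> show ?thesis
    unfolding expansion_def by (intro exI[of _ "Suc k # \<alpha>'"]) auto
qed

lemma expansion_remdups_adj: "expansion x (remdups_adj x)"
proof (induction x)
  case Nil
  then show ?case by (simp add: expansion_def)
next
  case (Cons a x)
  note IH = this
  show ?case
  proof (cases "remdups_adj x")
    case Nil
    then show ?thesis using expansion_Cons[of "[]" "[]" a] by (simp add: expansion_def)
  next
    case (Cons b z)
    then show ?thesis
      using expansion_Cons[OF IH, of a] expansion_Cons_repeat[of x b z] IH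
      by (auto simp: remdups_adj_Cons)
  qed
qed

lemma condensed_eq_remdups_adj: "condensed x = remdups_adj x"
  unfolding condensed_def
proof (rule the_equality)
  show "irreducible_ts (remdups_adj x) \<and> expansion x (remdups_adj x)"
    by (simp add: irreducible_ts_def expansion_remdups_adj remdups_adj_adjacent)
next
  fix z assume z: "irreducible_ts z \<and> expansion x z"
  then have "remdups_adj x = remdups_adj z"
    unfolding expansion_def using remdups_adj_expansion by blast
  also have "\<dots> = z"
    using z distinct_adj_altdef distinct_adj_conv_nth unfolding irreducible_ts_def by blast
  finally show "z = remdups_adj x" by simp
qed

lemma remdups_adj_remdups_adj [simp]: "remdups_adj (remdups_adj xs) = remdups_adj xs"
  using distinct_adj_altdef distinct_adj_remdups_adj by blast

lemma wclass_eq: "x \<in> TS \<Longrightarrow> wclass x = {y \<in> TS. remdups_adj y = remdups_adj x}"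
  unfolding wclass_def warp_ident_def TS_def using dtw_eq_0_iff_remdups_adj_eq by auto

lemma remdups_adj_in_wclass: "x \<in> TS \<Longrightarrow> remdups_adj x \<in> wclass x"
  by (auto simp: wclass_eq TS_def)

lemma twi_dist_wclass:
  assumes x: "x \<in> TS" and y: "y \<in> TS"
  shows "twi_dist (wclass x) (wclass y) = dtw (remdups_adj x) (remdups_adj y)"
proof -
  have inner: "(INF y'\<in>wclass y. dtw x' y') = dtw x' (remdups_adj y)" if "x' \<in> TS" for x'
  proof (rule cInf_eq_minimum)
    fix d assume "d \<in> (\<lambda>y'. dtw x' y') ` wclass y"
    then obtain y' where "y' \<in> TS" "remdups_adj y' = remdups_adj y" "d = dtw x' y'"
      using wclass_eq[OF y] by auto
    then show "dtw x' (remdups_adj y) \<le> d"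
      using dtw_remdups_adj_right_le[of x' y'] that by (simp add: TS_def)
  qed (use remdups_adj_in_wclass[OF y] in blast)
  have "twi_dist (wclass x) (wclass y) = (INF x'\<in>wclass x. dtw x' (remdups_adj y))"
    unfolding twi_dist_def using inner by (intro INF_cong) (auto simp: wclass_def)
  also have "\<dots> = dtw (remdups_adj x) (remdups_adj y)"
  proof (rule cInf_eq_minimum)
    fix d assume "d \<in> (\<lambda>x'. dtw x' (remdups_adj y)) ` wclass x"
    then obtain x' where "x' \<in> TS" "remdups_adj x' = remdups_adj x" "d = dtw x' (remdups_adj y)"
      using wclass_eq[OF x] by auto
    then show "dtw (remdups_adj x) (remdups_adj y) \<le> d"
      using dtw_remdups_adj_left_le[of x' "remdups_adj y"] y by (simp add: TS_def)
  qed (use remdups_adj_in_wclass[OF x] in blast)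
  finally show ?thesis .
qed

lemma semimetric_on_TSstar_twi_dist: "semimetric_on TSstar twi_dist"
  unfolding semimetric_on_def TSstar_def
proof (intro ballI, elim imageE)
  fix A B x y assume x: "x \<in> TS" "A = wclass x" and y: "y \<in> TS" "B = wclass y"
  have ne: "remdups_adj x \<noteq> []" "remdups_adj y \<noteq> []" using x y by (auto simp: TS_def)
  have "A = B \<longleftrightarrow> remdups_adj x = remdups_adj y"
    using x y wclass_eq by auto
  also have "\<dots> \<longleftrightarrow> dtw (remdups_adj x) (remdups_adj y) = 0"
    using dtw_eq_0_iff_remdups_adj_eq[OF ne] by simp
  finally show "0 \<le> twi_dist A B \<and> (twi_dist A B = 0 \<longleftrightarrow> A = B) \<and> twi_dist A B = twi_dist B A"
    using twi_dist_wclass x y dtw_nonneg[OF ne] dtw_commute by auto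
qed

theorem theorem1:
  shows "semimetric_on TSstar twi_dist \<and>
         (\<forall>x\<in>TS. \<forall>y\<in>TS. twi_dist (wclass x) (wclass y) = dtw (condensed x) (condensed y))"
  using semimetric_on_TSstar_twi_dist twi_dist_wclass by (simp add: condensed_eq_remdups_adj)

end
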